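(* Let $R$ be a commutative elementary divisor domain, let $E,\Phi$ be $n\times n$ $d$-matrices, and let $A=P_A^{-1}EQ_A^{-1}$ with $P_A,Q_A\in GL_n(R)$. Every $n\times n$ matrix with Smith form $\Phi$ (i.e. equivalent to $\Phi$) is a left divisor of $A$ if and only if $\Phi\mid E$ and $\mathbf L(E,\Phi)=GL_n(R)$.
   Context: Elementary divisor domain: commutative integral domain over which every matrix is equivalent ($PAQ$, $P,Q$ invertible) to a $d$-matrix (diagonal $\mathrm{diag}(\varphi_1,\dots)$ with $\varphi_i\mid\varphi_{i+1}$). For $E=\mathrm{diag}(\varepsilon_1,\dots,\varepsilon_k,0,\dots,0)$, $\Phi=\mathrm{diag}(\varphi_1,\dots,\varphi_t,0,\dots,0)$ with $\varepsilon_k,\varphi_t\ne0$, $\Phi\mid E$ means $k\le t$ and $\varphi_i\mid\varepsilon_i$ for $i\le k$. $\mathbf L(E,\Phi)=\{L\in GL_n(R):\exists S\in M_n(R),\ LE=\Phi S\}$. $B$ is a left divisor of $A$ if $A=BC$ for some matrix $C$. *)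

theory Defs
  imports "Jordan_Normal_Form.Matrix"
begin

definition GL :: "nat \<Rightarrow> 'a::comm_ring_1 mat set" where
  "GL n = {L \<in> carrier_mat n n. invertible_mat L}"

definition d_matrix :: "'a::comm_ring_1 mat \<Rightarrow> bool" where
  "d_matrix D \<longleftrightarrow> diagonal_mat D \<and>
     (\<forall>i. Suc i < min (dim_row D) (dim_col D) \<longrightarrow> D $$ (i, i) dvd D $$ (Suc i, Suc i))"

definition mat_equiv :: "'a::comm_ring_1 mat \<Rightarrow> 'a mat \<Rightarrow> bool" where
  "mat_equiv A B \<longleftrightarrow> (\<exists>P Q. P \<in> GL (dim_row A) \<and> Q \<in> GL (dim_col A) \<and> P * A * Q = B)"

definition elementary_divisor_domain :: "'a::idom itself \<Rightarrow> bool" where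
  "elementary_divisor_domain (_ :: 'a itself) \<longleftrightarrow>
     (\<forall>m k (A :: 'a mat). A \<in> carrier_mat m k \<longrightarrow> (\<exists>D. d_matrix D \<and> mat_equiv A D))"

definition nz_diag :: "'a::comm_ring_1 mat \<Rightarrow> nat" where
  "nz_diag D = card {i. i < min (dim_row D) (dim_col D) \<and> D $$ (i, i) \<noteq> 0}"

text \<open>\<Phi> | E for d-matrices E = diag(eps_1..eps_k,0..), \<Phi> = diag(phi_1..phi_t,0..):
  k \<le> t and phi_i | eps_i for i \<le> k (0-based indices here).\<close>
definition d_dvd :: "'a::comm_ring_1 mat \<Rightarrow> 'a mat \<Rightarrow> bool" where
  "d_dvd Phi E \<longleftrightarrow> nz_diag E \<le> nz_diag Phi \<and>
     (\<forall>i < nz_diag E. Phi $$ (i, i) dvd E $$ (i, i))"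

definition Lset :: "nat \<Rightarrow> 'a::comm_ring_1 mat \<Rightarrow> 'a mat \<Rightarrow> 'a mat set" where
  "Lset n E Phi = {L \<in> GL n. \<exists>S \<in> carrier_mat n n. L * E = Phi * S}"

definition left_divisor :: "nat \<Rightarrow> 'a::comm_ring_1 mat \<Rightarrow> 'a mat \<Rightarrow> bool" where
  "left_divisor n B A \<longleftrightarrow> (\<exists>C \<in> carrier_mat n n. A = B * C)"

end

theory Submission
  imports Defs
begin

text \<open>Writing \<open>A = P\<^sub>A\<^sup>-\<^sup>1 E Q\<^sub>A\<^sup>-\<^sup>1\<close>, a matrix \<open>P\<^sup>-\<^sup>1 \<Phi> Q\<^sup>-\<^sup>1\<close> equivalent to \<open>\<Phi>\<close> divides \<open>A\<close>
  from the left exactly when \<open>\<Phi>\<close> divides \<open>P P\<^sub>A\<^sup>-\<^sup>1 E\<close> from the left; the right factors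
  \<open>Q\<^sup>-\<^sup>1\<close>, \<open>Q\<^sub>A\<^sup>-\<^sup>1\<close> never matter. As \<open>P\<close> ranges over \<open>GL\<^sub>n\<close>, so does \<open>P P\<^sub>A\<^sup>-\<^sup>1\<close>, hence all
  such matrices divide \<open>A\<close> iff \<open>\<Phi>\<close> left-divides \<open>L E\<close> for every invertible \<open>L\<close>, which is
  \<open>L(E,\<Phi>) = GL\<^sub>n\<close>. Taking \<open>L = I\<close> gives \<open>E = \<Phi> S\<close>, and since \<open>\<Phi>\<close> is diagonal this
  yields \<open>\<phi>\<^sub>i | \<epsilon>\<^sub>i\<close>, i.e. \<open>\<Phi> | E\<close>.\<close>

lemma GL_carrier: "L \<in> GL n \<Longrightarrow> L \<in> carrier_mat n n"
  by (simp add: GL_def)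

lemma GL_intro:
  assumes "L \<in> carrier_mat n n" "M \<in> carrier_mat n n" "L * M = 1\<^sub>m n" "M * L = 1\<^sub>m n"
  shows "L \<in> GL n"
  using assms unfolding GL_def invertible_mat_def inverts_mat_def square_mat.simps by auto

lemma GL_inverseE:
  assumes "L \<in> GL n"
  obtains M where "M \<in> GL n" "L * M = 1\<^sub>m n" "M * L = 1\<^sub>m n"
proof -
  have L: "L \<in> carrier_mat n n" and "invertible_mat L"
    using assms by (auto simp: GL_def)
  then obtain M where right_inv: "L * M = 1\<^sub>m n" and left_inv: "M * L = 1\<^sub>m (dim_row M)"
    unfolding invertible_mat_def inverts_mat_def by auto
  have "M \<in> carrier_mat n n"
    using arg_cong[OF right_inv, of dim_col] arg_cong[OF left_inv, of dim_col] L by auto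
  with L right_inv left_inv have "M \<in> GL n" "M * L = 1\<^sub>m n"
    by (auto intro: GL_intro)
  with right_inv show thesis
    using that by blast
qed

lemma GL_one: "1\<^sub>m n \<in> GL n"
  by (rule GL_intro[of _ n "1\<^sub>m n"]) auto

lemma GL_mult:
  assumes "L \<in> GL n" "M \<in> GL n"
  shows "L * M \<in> GL n"
proof -
  obtain L' where L': "L' \<in> GL n" "L * L' = 1\<^sub>m n" "L' * L = 1\<^sub>m n"
    using assms(1) by (rule GL_inverseE)
  obtain M' where M': "M' \<in> GL n" "M * M' = 1\<^sub>m n" "M' * M = 1\<^sub>m n"
    using assms(2) by (rule GL_inverseE)
  note carriers = assms[THEN GL_carrier] L'(1)[THEN GL_carrier] M'(1)[THEN GL_carrier]
  have "(L * M) * (M' * L') = L * (M * M') * L'"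
    using carriers by (simp add: assoc_mult_mat[of _ n n _ n _ n])
  moreover have "(M' * L') * (L * M) = M' * (L' * L) * M"
    using carriers by (simp add: assoc_mult_mat[of _ n n _ n _ n])
  ultimately show ?thesis
    using carriers L' M' by (intro GL_intro[of _ n "M' * L'"]) auto
qed

lemma diagonal_mat_mult_index:
  assumes "D \<in> carrier_mat n n" "S \<in> carrier_mat n n" "diagonal_mat D" "i < n" "j < n"
  shows "(D * S) $$ (i, j) = D $$ (i, i) * S $$ (i, j)"
proof -
  have "(D * S) $$ (i, j) = (\<Sum>k\<in>{0..<n}. D $$ (i, k) * S $$ (k, j))"
    using assms by (simp add: scalar_prod_def)
  also have "\<dots> = (\<Sum>k\<in>{0..<n}. if k = i then D $$ (i, i) * S $$ (i, j) else 0)"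
    using assms by (intro sum.cong) (auto simp: diagonal_mat_def)
  also have "\<dots> = D $$ (i, i) * S $$ (i, j)"
    using assms by simp
  finally show ?thesis .
qed

lemma left_divisor_diagonal_imp_d_dvd:
  assumes Phi: "Phi \<in> carrier_mat n n" and E: "E \<in> carrier_mat n n"
    and "diagonal_mat Phi" and "left_divisor n Phi E"
  shows "d_dvd Phi E"
proof -
  obtain S where S: "S \<in> carrier_mat n n" and ES: "E = Phi * S"
    using assms(4) by (auto simp: left_divisor_def)
  have diag: "E $$ (i, i) = Phi $$ (i, i) * S $$ (i, i)" if "i < n" for i
    using diagonal_mat_mult_index[OF Phi S assms(3) that that] ES by simp
  have "{i. i < n \<and> E $$ (i, i) \<noteq> 0} \<subseteq> {i. i < n \<and> Phi $$ (i, i) \<noteq> 0}"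
    using diag by auto
  then have "nz_diag E \<le> nz_diag Phi"
    using Phi E unfolding nz_diag_def by (auto intro: card_mono)
  moreover have "nz_diag E \<le> n"
    using E card_mono[of "{..<n}" "{i. i < n \<and> E $$ (i, i) \<noteq> 0}"]
    unfolding nz_diag_def by auto
  ultimately show ?thesis
    unfolding d_dvd_def using diag by auto
qed

lemma all_equiv_left_divisor_iff:
  fixes Phi A :: "'a::comm_ring_1 mat"
  assumes Phi: "Phi \<in> carrier_mat n n" and A: "A \<in> carrier_mat n n"
  shows "(\<forall>B \<in> carrier_mat n n. mat_equiv B Phi \<longrightarrow> left_divisor n B A)
         \<longleftrightarrow> (\<forall>L \<in> GL n. left_divisor n Phi (L * A))"
proof (intro iffI ballI impI)
  fix L :: "'a mat" assume divides: "\<forall>B \<in> carrier_mat n n. mat_equiv B Phi \<longrightarrow> left_divisor n B A"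
    and LG: "L \<in> GL n"
  obtain L' where L': "L' \<in> GL n" "L * L' = 1\<^sub>m n" "L' * L = 1\<^sub>m n"
    using LG by (rule GL_inverseE)
  note carriers = GL_carrier[OF LG] GL_carrier[OF L'(1)] Phi
  have "L * (L' * Phi) * 1\<^sub>m n = (L * L') * Phi"
    using carriers by (simp add: assoc_mult_mat[of _ n n _ n _ n])
  then have "L * (L' * Phi) * 1\<^sub>m n = Phi"
    using carriers L'(2) by simp
  then have "mat_equiv (L' * Phi) Phi"
    using carriers LG GL_one unfolding mat_equiv_def by fastforce
  then obtain C where C: "C \<in> carrier_mat n n" and "A = L' * Phi * C"
    using divides carriers by (auto simp: left_divisor_def)
  then have "L * A = (L * L') * Phi * C"
    using carriers by (simp add: assoc_mult_mat[of _ n n _ n _ n])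
  then show "left_divisor n Phi (L * A)"
    using carriers C L'(2) by (auto simp: left_divisor_def assoc_mult_mat[of _ n n _ n _ n])
next
  fix B assume divides: "\<forall>L \<in> GL n. left_divisor n Phi (L * A)"
    and B: "B \<in> carrier_mat n n" and "mat_equiv B Phi"
  then obtain P Q where PG: "P \<in> GL n" and QG: "Q \<in> GL n" and PBQ: "P * B * Q = Phi"
    unfolding mat_equiv_def by auto
  obtain P' where P': "P' \<in> GL n" "P' * P = 1\<^sub>m n"
    using PG by (rule GL_inverseE)
  obtain C where C: "C \<in> carrier_mat n n" and PA: "P * A = Phi * C"
    using divides PG by (auto simp: left_divisor_def)
  note carriers = GL_carrier[OF PG] GL_carrier[OF QG] GL_carrier[OF P'(1)] B C A Phi
  have "A = (P' * P) * A"
    using P'(2) A by simp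
  also have "\<dots> = P' * (P * B * Q) * C"
    using carriers PA PBQ by (simp add: assoc_mult_mat[of _ n n _ n _ n])
  also have "\<dots> = (P' * P) * B * (Q * C)"
    using carriers by (simp add: assoc_mult_mat[of _ n n _ n _ n])
  finally have "A = B * (Q * C)"
    using P'(2) B by simp
  then show "left_divisor n B A"
    using carriers unfolding left_divisor_def by auto
qed

lemma all_GL_left_divisor_equiv:
  fixes P Q A Phi :: "'a::comm_ring_1 mat"
  assumes "P \<in> GL n" "Q \<in> GL n" "A \<in> carrier_mat n n" "Phi \<in> carrier_mat n n"
    and divides: "\<forall>L \<in> GL n. left_divisor n Phi (L * A)"
  shows "\<forall>L \<in> GL n. left_divisor n Phi (L * (P * A * Q))"
proof
  fix L :: "'a mat" assume LG: "L \<in> GL n"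
  obtain C where C: "C \<in> carrier_mat n n" and LPA: "L * P * A = Phi * C"
    using divides GL_mult[OF LG assms(1)] by (auto simp: left_divisor_def)
  note carriers = GL_carrier[OF LG] GL_carrier[OF assms(1)] GL_carrier[OF assms(2)] assms(3,4) C
  have "L * (P * A * Q) = (L * P * A) * Q"
    using carriers by (simp add: assoc_mult_mat[of _ n n _ n _ n])
  also have "\<dots> = Phi * (C * Q)"
    using carriers LPA by (simp add: assoc_mult_mat[of _ n n _ n _ n])
  finally have "L * (P * A * Q) = Phi * (C * Q)" .
  then show "left_divisor n Phi (L * (P * A * Q))"
    using carriers unfolding left_divisor_def by auto
qed

lemma Lset_eq_GL_iff:
  "Lset n E Phi = GL n \<longleftrightarrow> (\<forall>L \<in> GL n. left_divisor n Phi (L * E))"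
  unfolding Lset_def left_divisor_def by blast

theorem theorem5p3:
  fixes E Phi A P_A Q_A :: "'a::idom mat" and n :: nat
  assumes "elementary_divisor_domain TYPE('a)"
    and "E \<in> carrier_mat n n" and "Phi \<in> carrier_mat n n"
    and "d_matrix E" and "d_matrix Phi"
    and "P_A \<in> GL n" and "Q_A \<in> GL n"
    and "A \<in> carrier_mat n n" and "P_A * A * Q_A = E"
  shows "(\<forall>B \<in> carrier_mat n n. mat_equiv B Phi \<longrightarrow> left_divisor n B A)
         \<longleftrightarrow> (d_dvd Phi E \<and> Lset n E Phi = GL n)"
proof -
  obtain P' where P': "P' \<in> GL n" "P' * P_A = 1\<^sub>m n"
    using assms(6) by (rule GL_inverseE)
  obtain Q' where Q': "Q' \<in> GL n" "Q_A * Q' = 1\<^sub>m n"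
    using assms(7) by (rule GL_inverseE)
  note carriers = GL_carrier[OF assms(6)] GL_carrier[OF assms(7)]
    GL_carrier[OF P'(1)] GL_carrier[OF Q'(1)] assms(2,8)
  have "P' * E * Q' = P' * (P_A * A * Q_A) * Q'"
    using assms(9) by simp
  also have "\<dots> = (P' * P_A) * A * (Q_A * Q')"
    using carriers by (simp add: assoc_mult_mat[of _ n n _ n _ n])
  finally have A_from_E: "P' * E * Q' = A"
    using P'(2) Q'(2) assms(8) by simp
  have "(\<forall>B \<in> carrier_mat n n. mat_equiv B Phi \<longrightarrow> left_divisor n B A)
        \<longleftrightarrow> (\<forall>L \<in> GL n. left_divisor n Phi (L * A))"
    using assms(3,8) by (rule all_equiv_left_divisor_iff)
  also have "\<dots> \<longleftrightarrow> (\<forall>L \<in> GL n. left_divisor n Phi (L * E))"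
    using all_GL_left_divisor_equiv[OF assms(6,7,8,3)]
      all_GL_left_divisor_equiv[OF P'(1) Q'(1) assms(2,3)] A_from_E assms(9) by metis
  also have "\<dots> \<longleftrightarrow> d_dvd Phi E \<and> Lset n E Phi = GL n"
    using left_divisor_diagonal_imp_d_dvd[OF assms(3,2)] assms(2,5) GL_one[of n]
    by (auto simp: Lset_eq_GL_iff d_matrix_def)
  finally show ?thesis .
qed

end
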